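(* Let $\bar\Gamma$ be a finite connected graph with $k$ vertices, equipped with a groupoid representation $(\mathscr H_v, U_f)$ as described in the context, let $\mathscr H=\bigoplus_v \mathscr H_v$ and let $H$ be the associated Hamiltonian. Let $\boldsymbol\tau=(\tau,r,<)$ and $\boldsymbol\tau'=(\tau',r',<')$ be two ordered rooted spanning trees of $\bar\Gamma$, with associated matrix Hamiltonians $H_{\boldsymbol\tau}\in M_k(\mathscr A_r)$ and $H_{\boldsymbol\tau'}\in M_k(\mathscr A_{r'})$. Then there is a matrix $M\in M_k(\mathscr A_r)$ with $MM^*=M^*M=\mathrm{id}$ such that $$M H_{\boldsymbol\tau} M^* = U^{\tau}_{r r'}\, H_{\boldsymbol\tau'}\, U^{\tau}_{r' r},$$ where $U^\tau_{rr'}$ and $U^\tau_{r'r}$ act diagonally (as scalar matrices) between $\mathscr H_{r'}^k$ and $\mathscr H_r^k$. Moreover $M$ is an element of the gauge group, i.e. $M$ is the product of a diagonal matrix whose diagonal entries are unitary elements of $\mathscr A_r$ and a permutation matrix.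
   Context: $\bar\Gamma$ is a finite connected graph (multiple edges and loops allowed). Each edge has two orientations; for an oriented edge $f$ write $\bar f$ for the reversed one. A groupoid representation of $\bar\Gamma$ assigns to every vertex $v$ a separable Hilbert space $\mathscr H_v$ and to every oriented edge $f$ from $v$ to $w$ a unitary $U_f:\mathscr H_v\to\mathscr H_w$ with $U_{\bar f}=U_f^{*}$. For a walk $\gamma$ traversing oriented edges $f_1,\dots,f_m$ in this order set $U(\gamma)=U_{f_m}\cdots U_{f_1}$. The Hamiltonian is $H=\sum_{f}U_f$ on $\mathscr H=\bigoplus_v\mathscr H_v$, summed over all oriented edges (each $U_f$ viewed as a partial isometry on $\mathscr H$); thus for vertices $u,w$ its component $H_{wu}:\mathscr H_u\to\mathscr H_w$ is $\sum_{f \text{ from } u \text{ to } w}U_f$. An ordered rooted spanning tree $\boldsymbol\tau=(\tau,r,<)$ consists of a spanning tree $\tau$, a root vertex $r$, and a total order $u_1<u_2<\dots<u_k$ of all vertices with $u_1=r$. For vertices $x,y$ let $U^\tau_{yx}:=U(\gamma)$ where $\gamma$ is the unique non-backtracking path in $\tau$ from $x$ to $y$ (so $U^\tau_{yx}:\mathscr H_x\to\mathscr H_y$ and $U^\tau_{xy}=(U^\tau_{yx})^*$). $\mathscr A_r\subset B(\mathscr H_r)$ denotes the $C^*$-algebra generated by the operators $U(\gamma)$ for closed walks $\gamma$ based at $r$. The matrix Hamiltonian $H_{\boldsymbol\tau}\in M_k(\mathscr A_r)$, acting on $\mathscr H_r^k$, has entries $(H_{\boldsymbol\tau})_{ij}=U^\tau_{r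 u_i}H_{u_iu_j}U^\tau_{u_j r}$. For $\boldsymbol\tau'$ the same definitions are made with $\tau'$, root $r'$ and order $u'_1<'\dots<'u'_k$. *)

theory Defs
  imports "HOL-Analysis.Analysis" "Graph_Theory.Graph_Theory"
begin

definition hnorm :: "('h \<Rightarrow> 'h \<Rightarrow> complex) \<Rightarrow> 'h \<Rightarrow> real" where
  "hnorm ip x = sqrt (Re (ip x x))"

definition complex_hilbert ::
  "(complex \<Rightarrow> 'h::ab_group_add \<Rightarrow> 'h) \<Rightarrow> ('h \<Rightarrow> 'h \<Rightarrow> complex) \<Rightarrow> bool" where
  "complex_hilbert sc ip \<longleftrightarrow>
     (\<forall>a b x. sc a (sc b x) = sc (a * b) x) \<and> (\<forall>x. sc 1 x = x) \<and>
     (\<forall>a x y. sc a (x + y) = sc a x + sc a y) \<and> (\<forall>a b x. sc (a + b) x = sc a x + sc b x) \<and>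
     (\<forall>x y z. ip x (y + z) = ip x y + ip x z) \<and> (\<forall>a x y. ip x (sc a y) = a * ip x y) \<and>
     (\<forall>x y. ip y x = cnj (ip x y)) \<and> (\<forall>x. 0 \<le> Re (ip x x)) \<and> (\<forall>x. ip x x = 0 \<longrightarrow> x = 0) \<and>
     (\<forall>X::nat \<Rightarrow> 'h. (\<forall>e>0. \<exists>N. \<forall>m\<ge>N. \<forall>n\<ge>N. hnorm ip (X m - X n) < e) \<longrightarrow>
        (\<exists>L. \<forall>e>0. \<exists>N. \<forall>n\<ge>N. hnorm ip (X n - L) < e))"

definition separable_set :: "('h::ab_group_add \<Rightarrow> 'h \<Rightarrow> complex) \<Rightarrow> 'h set \<Rightarrow> bool" where
  "separable_set ip S \<longleftrightarrow> (\<exists>D \<subseteq> S. countable D \<and> (\<forall>x\<in>S. \<forall>e>0. \<exists>d\<in>D. hnorm ip (x - d) < e))"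

definition bounded_op ::
  "(complex \<Rightarrow> 'h::ab_group_add \<Rightarrow> 'h) \<Rightarrow> ('h \<Rightarrow> 'h \<Rightarrow> complex) \<Rightarrow> ('h \<Rightarrow> 'h) \<Rightarrow> bool" where
  "bounded_op sc ip A \<longleftrightarrow> (\<forall>x y. A (x + y) = A x + A y) \<and> (\<forall>c x. A (sc c x) = sc c (A x)) \<and>
     (\<exists>K. \<forall>x. hnorm ip (A x) \<le> K * hnorm ip x)"

definition adj ::
  "(complex \<Rightarrow> 'h::ab_group_add \<Rightarrow> 'h) \<Rightarrow> ('h \<Rightarrow> 'h \<Rightarrow> complex) \<Rightarrow> ('h \<Rightarrow> 'h) \<Rightarrow> ('h \<Rightarrow> 'h)" where
  "adj sc ip A = (SOME B. bounded_op sc ip B \<and> (\<forall>x y. ip (A x) y = ip x (B y)))"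

definition opnorm :: "('h \<Rightarrow> 'h \<Rightarrow> complex) \<Rightarrow> ('h \<Rightarrow> 'h) \<Rightarrow> real" where
  "opnorm ip A = Sup {hnorm ip (A x) | x. hnorm ip x \<le> 1}"

definition cstar_gen ::
  "(complex \<Rightarrow> 'h::ab_group_add \<Rightarrow> 'h) \<Rightarrow> ('h \<Rightarrow> 'h \<Rightarrow> complex) \<Rightarrow> ('h \<Rightarrow> 'h) set \<Rightarrow> ('h \<Rightarrow> 'h) set" where
  "cstar_gen sc ip S = \<Inter> {C. S \<subseteq> C \<and> C \<subseteq> {A. bounded_op sc ip A} \<and>
      (\<forall>A\<in>C. \<forall>B\<in>C. (\<lambda>x. A x + B x) \<in> C) \<and>
      (\<forall>A\<in>C. \<forall>c. (\<lambda>x. sc c (A x)) \<in> C) \<and>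
      (\<forall>A\<in>C. \<forall>B\<in>C. A \<circ> B \<in> C) \<and>
      (\<forall>A\<in>C. adj sc ip A \<in> C) \<and>
      (\<forall>X L. (\<forall>n. X n \<in> C) \<and> bounded_op sc ip L \<and>
             (\<lambda>n. opnorm ip (\<lambda>x. X n x - L x)) \<longlonglongrightarrow> 0 \<longrightarrow> L \<in> C)}"

section \<open>Graphs: finite connected graph as a bidirected digraph (oriented edges, reversal erev)\<close>

definition non_backtracking :: "('e \<Rightarrow> 'e) \<Rightarrow> 'e list \<Rightarrow> bool" where
  "non_backtracking erev p \<longleftrightarrow> (\<forall>i. Suc i < length p \<longrightarrow> p ! Suc i \<noteq> erev (p ! i))"

text \<open>A spanning tree, given by its set T of oriented edges (closed under reversal):
connected on all vertices and without non-trivial non-backtracking closed walks (cycles).\<close>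
definition is_spanning_tree :: "('v,'e) pre_digraph \<Rightarrow> ('e \<Rightarrow> 'e) \<Rightarrow> 'e set \<Rightarrow> bool" where
  "is_spanning_tree G erev T \<longleftrightarrow> T \<subseteq> arcs G \<and> (\<forall>a\<in>T. erev a \<in> T) \<and>
     connected (G\<lparr>arcs := T\<rparr>) \<and>
     \<not> (\<exists>u p. p \<noteq> [] \<and> pre_digraph.awalk (G\<lparr>arcs := T\<rparr>) u p u \<and> non_backtracking erev p)"

definition tree_path :: "('v,'e) pre_digraph \<Rightarrow> ('e \<Rightarrow> 'e) \<Rightarrow> 'e set \<Rightarrow> 'v \<Rightarrow> 'v \<Rightarrow> 'e list" where
  "tree_path G erev T x y = (THE p. pre_digraph.awalk (G\<lparr>arcs := T\<rparr>) x p y \<and> non_backtracking erev p)"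

text \<open>The Hilbert space is H = direct sum of the H_v, realised on one Hilbert space with
mutually orthogonal projections P v onto H_v summing to the identity. Each U f for an oriented
edge f from v to w is a unitary H_v \<rightarrow> H_w, viewed as a partial isometry on H.\<close>
definition groupoid_rep ::
  "(complex \<Rightarrow> 'h::ab_group_add \<Rightarrow> 'h) \<Rightarrow> ('h \<Rightarrow> 'h \<Rightarrow> complex) \<Rightarrow> ('v,'e) pre_digraph \<Rightarrow>
   ('e \<Rightarrow> 'e) \<Rightarrow> ('v \<Rightarrow> 'h \<Rightarrow> 'h) \<Rightarrow> ('e \<Rightarrow> 'h \<Rightarrow> 'h) \<Rightarrow> bool" where
  "groupoid_rep sc ip G erev P U \<longleftrightarrow>
     complex_hilbert sc ip \<and>
     (\<forall>v\<in>verts G. bounded_op sc ip (P v) \<and> P v \<circ> P v = P v \<and> adj sc ip (P v) = P v \<and>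
                  separable_set ip (range (P v))) \<and>
     (\<forall>v\<in>verts G. \<forall>w\<in>verts G. v \<noteq> w \<longrightarrow> P v \<circ> P w = (\<lambda>_. 0)) \<and>
     (\<forall>x. (\<Sum>v\<in>verts G. P v x) = x) \<and>
     (\<forall>f\<in>arcs G. bounded_op sc ip (U f) \<and>
        U f = P (head G f) \<circ> U f \<circ> P (tail G f) \<and>
        adj sc ip (U f) \<circ> U f = P (tail G f) \<and> U f \<circ> adj sc ip (U f) = P (head G f) \<and>
        U (erev f) = adj sc ip (U f))"

text \<open>U(gamma) = U_fm ... U_f1 for the walk f1,...,fm starting at x (identity of H_x for
the empty walk).\<close>
definition Uwalk :: "('v \<Rightarrow> 'h \<Rightarrow> 'h) \<Rightarrow> ('e \<Rightarrow> 'h \<Rightarrow> 'h) \<Rightarrow> 'v \<Rightarrow> 'e list \<Rightarrow> 'h \<Rightarrow> 'h" where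
  "Uwalk P U x p = foldl (\<lambda>A f. U f \<circ> A) (P x) p"

text \<open>U^tau_{yx} : H_x \<rightarrow> H_y.\<close>
definition Utree :: "('v,'e) pre_digraph \<Rightarrow> ('e \<Rightarrow> 'e) \<Rightarrow> ('v \<Rightarrow> 'h \<Rightarrow> 'h) \<Rightarrow> ('e \<Rightarrow> 'h \<Rightarrow> 'h) \<Rightarrow>
    'e set \<Rightarrow> 'v \<Rightarrow> 'v \<Rightarrow> 'h \<Rightarrow> 'h" where
  "Utree G erev P U T y x = Uwalk P U x (tree_path G erev T x y)"

definition Hamiltonian :: "('v,'e) pre_digraph \<Rightarrow> ('e \<Rightarrow> 'h::ab_group_add \<Rightarrow> 'h) \<Rightarrow> 'h \<Rightarrow> 'h" where
  "Hamiltonian G U = (\<lambda>x. \<Sum>f\<in>arcs G. U f x)"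

definition Hcomp :: "('v,'e) pre_digraph \<Rightarrow> ('e \<Rightarrow> 'h::ab_group_add \<Rightarrow> 'h) \<Rightarrow> 'v \<Rightarrow> 'v \<Rightarrow> 'h \<Rightarrow> 'h" where
  "Hcomp G U w u = (\<lambda>x. \<Sum>f\<in>{f\<in>arcs G. tail G f = u \<and> head G f = w}. U f x)"

text \<open>A_r: the C*-algebra generated by U(gamma) for closed walks gamma at r (operators on H_r,
viewed as operators on H supported on H_r).\<close>
definition Aalg ::
  "(complex \<Rightarrow> 'h::ab_group_add \<Rightarrow> 'h) \<Rightarrow> ('h \<Rightarrow> 'h \<Rightarrow> complex) \<Rightarrow> ('v,'e) pre_digraph \<Rightarrow>
   ('v \<Rightarrow> 'h \<Rightarrow> 'h) \<Rightarrow> ('e \<Rightarrow> 'h \<Rightarrow> 'h) \<Rightarrow> 'v \<Rightarrow> ('h \<Rightarrow> 'h) set" where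
  "Aalg sc ip G P U r = cstar_gen sc ip {Uwalk P U r p | p. pre_digraph.awalk G r p r}"

text \<open>Ordered rooted spanning tree (T, r, ord): ord enumerates the vertices u_1 < ... < u_k
as ord 0, ..., ord (k-1) (0-based), with ord 0 = r.\<close>
definition ordered_rooted_spanning_tree ::
  "('v,'e) pre_digraph \<Rightarrow> ('e \<Rightarrow> 'e) \<Rightarrow> 'e set \<Rightarrow> 'v \<Rightarrow> (nat \<Rightarrow> 'v) \<Rightarrow> bool" where
  "ordered_rooted_spanning_tree G erev T r ord \<longleftrightarrow>
     is_spanning_tree G erev T \<and> bij_betw ord {..<card (verts G)} (verts G) \<and> ord 0 = r"

type_synonym 'h opmat = "nat \<Rightarrow> nat \<Rightarrow> 'h \<Rightarrow> 'h"

definition mat_mult :: "nat \<Rightarrow> ('h::ab_group_add) opmat \<Rightarrow> 'h opmat \<Rightarrow> 'h opmat" where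
  "mat_mult k A B = (\<lambda>i j x. \<Sum>l<k. A i l (B l j x))"

definition mat_adj :: "(complex \<Rightarrow> 'h::ab_group_add \<Rightarrow> 'h) \<Rightarrow> ('h \<Rightarrow> 'h \<Rightarrow> complex) \<Rightarrow> 'h opmat \<Rightarrow> 'h opmat" where
  "mat_adj sc ip A = (\<lambda>i j. adj sc ip (A j i))"

text \<open>Identity of M_k(A_r): diagonal with the identity P r of H_r.\<close>
definition mat_id :: "('v \<Rightarrow> 'h::ab_group_add \<Rightarrow> 'h) \<Rightarrow> 'v \<Rightarrow> 'h opmat" where
  "mat_id P r = (\<lambda>i j. if i = j then P r else (\<lambda>_. 0))"

definition mat_eq :: "nat \<Rightarrow> 'h opmat \<Rightarrow> 'h opmat \<Rightarrow> bool" where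
  "mat_eq k A B \<longleftrightarrow> (\<forall>i<k. \<forall>j<k. A i j = B i j)"

definition diag_mat :: "(nat \<Rightarrow> 'h \<Rightarrow> 'h::ab_group_add) \<Rightarrow> 'h opmat" where
  "diag_mat D = (\<lambda>i j. if i = j then D i else (\<lambda>_. 0))"

definition perm_mat :: "('v \<Rightarrow> 'h::ab_group_add \<Rightarrow> 'h) \<Rightarrow> 'v \<Rightarrow> (nat \<Rightarrow> nat) \<Rightarrow> 'h opmat" where
  "perm_mat P r \<sigma> = (\<lambda>i j. if i = \<sigma> j then P r else (\<lambda>_. 0))"

definition mat_ham :: "('v,'e) pre_digraph \<Rightarrow> ('e \<Rightarrow> 'e) \<Rightarrow> ('v \<Rightarrow> 'h::ab_group_add \<Rightarrow> 'h) \<Rightarrow>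
    ('e \<Rightarrow> 'h \<Rightarrow> 'h) \<Rightarrow> 'e set \<Rightarrow> 'v \<Rightarrow> (nat \<Rightarrow> 'v) \<Rightarrow> 'h opmat" where
  "mat_ham G erev P U T r ord =
     (\<lambda>i j. Utree G erev P U T r (ord i) \<circ> Hcomp G U (ord i) (ord j) \<circ> Utree G erev P U T (ord j) r)"

definition unitary_in :: "(complex \<Rightarrow> 'h::ab_group_add \<Rightarrow> 'h) \<Rightarrow> ('h \<Rightarrow> 'h \<Rightarrow> complex) \<Rightarrow>
    ('h \<Rightarrow> 'h) set \<Rightarrow> ('h \<Rightarrow> 'h) \<Rightarrow> ('h \<Rightarrow> 'h) \<Rightarrow> bool" where
  "unitary_in sc ip A e d \<longleftrightarrow> d \<in> A \<and> d \<circ> adj sc ip d = e \<and> adj sc ip d \<circ> d = e"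

end

theory Submission
  imports Defs
begin

text \<open>
  Let \<sigma> be the permutation with u'_{\<sigma> j} = u_j, and let D_i be the holonomy of the closed
  walk that runs from r to u'_i in \<tau>, from u'_i to r' in \<tau>' and back to r in \<tau>. Each D_i is a
  unitary of A_r, so M = diag(D) P_\<sigma> is a gauge transformation, and the (i,j) entry of
  M H_\<tau> M^* is D_i (H_\<tau>)_{\<sigma>^-1 i, \<sigma>^-1 j} D_j^*. Along \<tau> the paths between r and u'_i
  cancel, U^\<tau>_{u r} U^\<tau>_{r u} = 1 on H_u, which leaves U^\<tau>_{r r'} (H_\<tau>')_{i j} U^\<tau>_{r' r}.
  The operators U(\<gamma>) are unitary because U(\<gamma>) followed by U of the reversed walk is the
  identity; identifying the latter with the adjoint requires adjoints of bounded operators,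
  which come from the Riesz representation theorem.
\<close>

section \<open>Hilbert spaces and the Riesz representation theorem\<close>

locale hilbert_space =
  fixes sc :: "complex \<Rightarrow> 'h::ab_group_add \<Rightarrow> 'h" and ip :: "'h \<Rightarrow> 'h \<Rightarrow> complex"
  assumes sc_assoc: "\<And>a b x. sc a (sc b x) = sc (a * b) x"
    and sc_one: "\<And>x. sc 1 x = x"
    and sc_add_right: "\<And>a x y. sc a (x + y) = sc a x + sc a y"
    and sc_add_left: "\<And>a b x. sc (a + b) x = sc a x + sc b x"
    and ip_add_right: "\<And>x y z. ip x (y + z) = ip x y + ip x z"
    and ip_sc_right: "\<And>a x y. ip x (sc a y) = a * ip x y"
    and ip_conj_sym: "\<And>x y. ip y x = cnj (ip x y)"
    and ip_self_nonneg: "\<And>x. 0 \<le> Re (ip x x)"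
    and ip_self_eq_0: "\<And>x. ip x x = 0 \<Longrightarrow> x = 0"
    and cauchy_converges: "\<And>X :: nat \<Rightarrow> 'h. \<forall>e>0. \<exists>N. \<forall>m\<ge>N. \<forall>n\<ge>N. hnorm ip (X m - X n) < e \<Longrightarrow>
        \<exists>L. \<forall>e>0. \<exists>N. \<forall>n\<ge>N. hnorm ip (X n - L) < e"

lemma complex_hilbert_imp_hilbert_space: "complex_hilbert sc ip \<Longrightarrow> hilbert_space sc ip"
  unfolding complex_hilbert_def hilbert_space_def by (elim conjE) (intro conjI; assumption)

context hilbert_space
begin

sublocale module sc
  by unfold_locales (simp_all add: sc_assoc sc_one sc_add_right sc_add_left)

lemma hnorm_nonneg: "0 \<le> hnorm ip x"
  by (simp add: hnorm_def ip_self_nonneg)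

lemma hnorm_sq: "(hnorm ip x)^2 = Re (ip x x)"
  by (simp add: hnorm_def ip_self_nonneg)

lemma hilbert_complete:
  assumes "\<forall>e>0. \<exists>N. \<forall>m\<ge>N. \<forall>n\<ge>N. hnorm ip (X m - X n) < e"
  shows "\<exists>L. (\<lambda>n. hnorm ip (X n - L)) \<longlonglongrightarrow> 0"
proof -
  obtain L where "\<forall>e>0. \<exists>N. \<forall>n\<ge>N. hnorm ip (X n - L) < e"
    using cauchy_converges[OF assms] by blast
  then have "(\<lambda>n. hnorm ip (X n - L)) \<longlonglongrightarrow> 0"
    by (simp add: LIMSEQ_iff hnorm_nonneg)
  then show ?thesis ..
qed

lemma additive_ip_right: "Modules.additive (ip x)"
  by unfold_locales (rule ip_add_right)

lemma ip_zero_right [simp]: "ip x 0 = 0"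
  by (rule Modules.additive.zero[OF additive_ip_right])

lemma ip_minus_right: "ip x (- y) = - ip x y"
  by (rule Modules.additive.minus[OF additive_ip_right])

lemma ip_diff_right: "ip x (y - z) = ip x y - ip x z"
  by (rule Modules.additive.diff[OF additive_ip_right])

lemma ip_add_left: "ip (x + y) z = ip x z + ip y z"
  by (metis ip_add_right ip_conj_sym complex_cnj_add)

lemma ip_sc_left: "ip (sc a x) y = cnj a * ip x y"
  by (metis ip_sc_right ip_conj_sym complex_cnj_mult)

lemma ip_zero_left [simp]: "ip 0 y = 0"
  by (metis ip_zero_right ip_conj_sym complex_cnj_zero)

lemma ip_diff_left: "ip (x - y) z = ip x z - ip y z"
  by (metis ip_diff_right ip_conj_sym complex_cnj_diff)

lemma ip_self_eq_hnorm_sq: "ip x x = of_real ((hnorm ip x)^2)"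
proof -
  have "Im (ip x x) = 0"
    using arg_cong[OF ip_conj_sym[of x x], of Im] by simp
  then show ?thesis by (simp add: hnorm_sq complex_eq_iff)
qed

lemma hnorm_eq_0_iff [simp]: "hnorm ip x = 0 \<longleftrightarrow> x = 0"
  using ip_self_eq_0 ip_self_eq_hnorm_sq[of x] by (auto simp: hnorm_def)

lemma hnorm_zero [simp]: "hnorm ip 0 = 0"
  by simp

lemma ip_ext: "(\<And>x. ip x a = ip x b) \<Longrightarrow> a = b"
  by (metis eq_iff_diff_eq_0 ip_diff_right ip_self_eq_0)

lemma hnorm_sc: "hnorm ip (sc a x) = cmod a * hnorm ip x"
proof -
  have "ip (sc a x) (sc a x) = of_real ((cmod a)^2) * ip x x"
    using complex_norm_square[of a] by (simp add: ip_sc_left ip_sc_right ac_simps)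
  then have "Re (ip (sc a x) (sc a x)) = (cmod a)^2 * Re (ip x x)"
    by simp
  then have "(hnorm ip (sc a x))^2 = (cmod a * hnorm ip x)^2"
    by (simp add: hnorm_sq power_mult_distrib)
  then show ?thesis
    by (simp add: hnorm_nonneg power2_eq_iff_nonneg)
qed

lemma hnorm_minus [simp]: "hnorm ip (- x) = hnorm ip x"
  using hnorm_sc[of "-1" x] by simp

lemma hnorm_minus_commute: "hnorm ip (x - y) = hnorm ip (y - x)"
  by (metis hnorm_minus minus_diff_eq)

lemma hnorm_add_sq:
  "(hnorm ip (x + y))^2 = (hnorm ip x)^2 + 2 * Re (ip x y) + (hnorm ip y)^2"
  by (simp add: hnorm_sq ip_add_left ip_add_right ip_conj_sym[of x y])

lemma parallelogram:
  "(hnorm ip (x - y))^2 + (hnorm ip (x + y))^2 = 2 * (hnorm ip x)^2 + 2 * (hnorm ip y)^2"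
  by (simp add: hnorm_sq ip_add_left ip_add_right ip_diff_left ip_diff_right ip_conj_sym[of x y])

lemma cauchy_schwarz: "cmod (ip x y) \<le> hnorm ip x * hnorm ip y"
proof (cases "y = 0")
  case True
  then show ?thesis by simp
next
  case False
  define b where "b = (hnorm ip y)^2"
  define c where "c = ip x y"
  define t where "t = cnj c / of_real b"
  have b: "b > 0"
    using False hnorm_nonneg[of y] by (simp add: b_def)
  have cc: "c * cnj c = of_real ((cmod c)^2)"
    by (rule complex_norm_square[symmetric])
  have "ip (x - sc t y) (x - sc t y) = ip x x - t * c - cnj t * cnj c + cnj t * (t * of_real b)"
    by (simp add: ip_diff_left ip_diff_right ip_sc_left ip_sc_right c_def b_def
        ip_conj_sym[of y x] ip_self_eq_hnorm_sq[of y] algebra_simps)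
  also have "\<dots> = ip x x - of_real ((cmod c)^2 / b)"
    using b cc by (simp add: t_def field_simps)
  finally have "(cmod c)^2 / b \<le> (hnorm ip x)^2"
    using ip_self_nonneg[of "x - sc t y"] by (simp add: hnorm_sq)
  then have "(cmod c)^2 \<le> (hnorm ip x * hnorm ip y)^2"
    using b by (simp add: b_def field_simps power_mult_distrib)
  then show ?thesis
    unfolding c_def by (meson hnorm_nonneg mult_nonneg_nonneg power2_le_imp_le)
qed

lemma hnorm_triangle: "hnorm ip (x + y) \<le> hnorm ip x + hnorm ip y"
proof -
  have "Re (ip x y) \<le> hnorm ip x * hnorm ip y"
    using cauchy_schwarz[of x y] complex_Re_le_cmod[of "ip x y"] by linarith
  then have "(hnorm ip (x + y))^2 \<le> (hnorm ip x + hnorm ip y)^2"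
    by (simp add: hnorm_add_sq power2_sum)
  then show ?thesis
    by (meson add_nonneg_nonneg hnorm_nonneg power2_le_imp_le)
qed

lemma minimizing_sequence_Cauchy:
  assumes mid: "\<And>x y. x \<in> S \<Longrightarrow> y \<in> S \<Longrightarrow> sc (1/2) (x + y) \<in> S"
    and low: "\<And>x. x \<in> S \<Longrightarrow> d \<le> (hnorm ip x)^2"
    and X: "\<And>n. X n \<in> S" "\<And>n. (hnorm ip (X n))^2 < d + inverse (Suc n)"
  shows "\<forall>e>0. \<exists>N. \<forall>m\<ge>N. \<forall>n\<ge>N. hnorm ip (X m - X n) < e"
proof (intro allI impI)
  fix e :: real
  assume e: "e > 0"
  have close: "(hnorm ip (X m - X n))^2 < 2 * inverse (Suc m) + 2 * inverse (Suc n)" for m n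
  proof -
    have "d \<le> (hnorm ip (sc (1/2) (X m + X n)))^2"
      using low[OF mid[OF X(1) X(1)]] .
    then have "4 * d \<le> (hnorm ip (X m + X n))^2"
      by (simp add: hnorm_sc power_divide)
    then show ?thesis
      using parallelogram[of "X m" "X n"] X(2)[of m] X(2)[of n] by linarith
  qed
  obtain N :: nat where N: "4 / e^2 < N"
    using reals_Archimedean2 by blast
  have "4 < real N * e^2"
    using N e by (simp add: field_simps)
  also have "\<dots> \<le> real (Suc N) * e^2"
    by (simp add: mult_right_mono)
  finally have "4 * inverse (Suc N) < e^2"
    by (simp add: field_simps)
  show "\<exists>N. \<forall>m\<ge>N. \<forall>n\<ge>N. hnorm ip (X m - X n) < e"
  proof (intro exI allI impI)
    fix m n
    assume "N \<le> m" "N \<le> n"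
    then have "inverse (real (Suc m)) \<le> inverse (Suc N)" "inverse (real (Suc n)) \<le> inverse (Suc N)"
      by (simp_all add: le_imp_inverse_le)
    then have "(hnorm ip (X m - X n))^2 < e^2"
      using close[of m n] \<open>4 * inverse (Suc N) < e^2\<close> by linarith
    then show "hnorm ip (X m - X n) < e"
      using e by (simp add: power_less_imp_less_base)
  qed
qed

lemma minimal_norm_element:
  assumes "x0 \<in> S"
    and mid: "\<And>x y. x \<in> S \<Longrightarrow> y \<in> S \<Longrightarrow> sc (1/2) (x + y) \<in> S"
    and closed: "\<And>X L. (\<And>n. X n \<in> S) \<Longrightarrow> (\<lambda>n. hnorm ip (X n - L)) \<longlonglongrightarrow> 0 \<Longrightarrow> L \<in> S"
  shows "\<exists>L\<in>S. \<forall>x\<in>S. hnorm ip L \<le> hnorm ip x"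
proof -
  define d where "d = Inf ((\<lambda>x. (hnorm ip x)^2) ` S)"
  have bdd: "bdd_below ((\<lambda>x. (hnorm ip x)^2) ` S)"
    by (rule bdd_belowI[of _ 0]) auto
  have low: "d \<le> (hnorm ip x)^2" if "x \<in> S" for x
    unfolding d_def using bdd that by (auto intro: cInf_lower)
  have "\<exists>x\<in>S. (hnorm ip x)^2 < d + inverse (Suc n)" for n
    using cInf_less_iff[OF _ bdd, of "d + inverse (Suc n)"] assms(1) unfolding d_def by auto
  then obtain X where X: "\<And>n. X n \<in> S" "\<And>n. (hnorm ip (X n))^2 < d + inverse (Suc n)"
    by metis
  obtain L where L: "(\<lambda>n. hnorm ip (X n - L)) \<longlonglongrightarrow> 0"
    using hilbert_complete[OF minimizing_sequence_Cauchy[OF mid low X]] by blast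
  have "(\<lambda>n. (hnorm ip (X n))^2) \<longlonglongrightarrow> d"
    by (rule tendsto_sandwich[OF _ _ tendsto_const LIMSEQ_inverse_real_of_nat_add])
      (use X low in \<open>auto intro!: always_eventually less_imp_le\<close>)
  then have "(\<lambda>n. hnorm ip (X n)) \<longlonglongrightarrow> sqrt d"
    using tendsto_real_sqrt by (fastforce simp: hnorm_nonneg)
  then have "(\<lambda>n. hnorm ip (X n) + hnorm ip (X n - L)) \<longlonglongrightarrow> sqrt d"
    using tendsto_add[OF _ L] by simp
  moreover have "hnorm ip L \<le> hnorm ip (X n) + hnorm ip (X n - L)" for n
    using hnorm_triangle[of "X n" "L - X n"] by (simp add: hnorm_minus_commute)
  ultimately have "hnorm ip L \<le> sqrt d"
    by (intro LIMSEQ_le_const) auto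
  moreover have "sqrt d \<le> hnorm ip x" if "x \<in> S" for x
    using real_sqrt_le_mono[OF low[OF that]] by (simp add: hnorm_nonneg)
  ultimately show ?thesis
    using closed[OF X(1) L] by force
qed

lemma orthogonal_if_norm_minimal:
  assumes min: "\<And>t. hnorm ip L \<le> hnorm ip (L + sc t w)"
  shows "ip L w = 0"
proof (rule ccontr)
  assume "ip L w \<noteq> 0"
  define c where "c = cmod (ip L w)"
  define s where "s = 1 / (1 + (hnorm ip w)^2)"
  have "0 < 1 + (hnorm ip w)^2"
    by (simp add: add_pos_nonneg)
  then have s: "0 < s" "s * (hnorm ip w)^2 < 1"
    by (simp_all add: s_def field_simps)
  define t where "t = - of_real s * cnj (ip L w)"
  have "Re (ip L (sc t w)) = - s * c^2"
    using cmod_power2[of "ip L w"]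
    by (simp add: ip_sc_right ip_minus_right t_def c_def power2_eq_square algebra_simps)
  moreover have "hnorm ip (sc t w) = s * c * hnorm ip w"
    using s by (simp add: hnorm_sc t_def c_def norm_mult abs_of_pos)
  moreover have "(hnorm ip L)^2 \<le> (hnorm ip L)^2 + 2 * Re (ip L (sc t w)) + (hnorm ip (sc t w))^2"
    using power_mono[OF min[of t] hnorm_nonneg, of 2] hnorm_add_sq[of L "sc t w"] by linarith
  ultimately have "0 \<le> - 2 * s * c^2 + (s * c * hnorm ip w)^2"
    by simp
  also have "\<dots> = s * c^2 * (s * (hnorm ip w)^2 - 2)"
    by (simp add: algebra_simps power2_eq_square)
  finally have "0 \<le> s * c^2 * (s * (hnorm ip w)^2 - 2)" .
  moreover have "0 < s * c^2"
    using s \<open>ip L w \<noteq> 0\<close> by (simp add: c_def)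
  ultimately show False
    using s by (simp add: zero_le_mult_iff)
qed

lemma bounded_functional_continuous:
  fixes \<phi> :: "'h \<Rightarrow> complex"
  assumes add: "\<And>x y. \<phi> (x + y) = \<phi> x + \<phi> y"
    and bound: "\<And>x. cmod (\<phi> x) \<le> C * hnorm ip x"
    and lim: "(\<lambda>n. hnorm ip (X n - L)) \<longlonglongrightarrow> 0"
  shows "(\<lambda>n. \<phi> (X n)) \<longlonglongrightarrow> \<phi> L"
proof -
  interpret \<phi>: Modules.additive \<phi>
    by unfold_locales (rule add)
  have "cmod (\<phi> (X n) - \<phi> L) \<le> norm (hnorm ip (X n - L)) * C" for n
    using bound[of "X n - L"] by (simp add: \<phi>.diff hnorm_nonneg mult.commute)
  then have "(\<lambda>n. \<phi> (X n) - \<phi> L) \<longlonglongrightarrow> 0"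
    by (intro tendsto_0_le[OF lim] always_eventually) blast
  then show ?thesis
    by (rule LIM_zero_cancel)
qed

lemma riesz_representation:
  fixes \<phi> :: "'h \<Rightarrow> complex"
  assumes add: "\<And>x y. \<phi> (x + y) = \<phi> x + \<phi> y"
    and conj_hom: "\<And>a x. \<phi> (sc a x) = cnj a * \<phi> x"
    and bound: "\<And>x. cmod (\<phi> x) \<le> C * hnorm ip x"
  shows "\<exists>z. \<forall>x. \<phi> x = ip x z"
proof (cases "\<forall>x. \<phi> x = 0")
  case True
  then show ?thesis by (intro exI[of _ 0]) simp
next
  case False
  then obtain x0 where x0: "\<phi> x0 \<noteq> 0" by blast
  interpret \<phi>: Modules.additive \<phi> by unfold_locales (rule add)
  txt \<open>The representing vector is a multiple of the element L of least norm on the hyperplane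
    \<phi> = 1, and L is orthogonal to the kernel of \<phi>.\<close>
  have "\<exists>L\<in>{x. \<phi> x = 1}. \<forall>x\<in>{x. \<phi> x = 1}. hnorm ip L \<le> hnorm ip x"
  proof (rule minimal_norm_element)
    show "sc (cnj (1 / \<phi> x0)) x0 \<in> {x. \<phi> x = 1}"
      using x0 by (simp add: conj_hom)
    show "sc (1/2) (x + y) \<in> {x. \<phi> x = 1}" if "x \<in> {x. \<phi> x = 1}" "y \<in> {x. \<phi> x = 1}" for x y
      using that by (simp add: conj_hom add)
    show "L \<in> {x. \<phi> x = 1}"
      if X: "\<And>n. X n \<in> {x. \<phi> x = 1}" and L: "(\<lambda>n. hnorm ip (X n - L)) \<longlonglongrightarrow> 0" for X L
      using bounded_functional_continuous[OF add bound L] X by (simp add: LIMSEQ_const_iff)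
  qed
  then obtain L where L: "\<phi> L = 1" and min: "\<And>x. \<phi> x = 1 \<Longrightarrow> hnorm ip L \<le> hnorm ip x"
    by blast
  have orth: "ip L w = 0" if "\<phi> w = 0" for w
    using that by (intro orthogonal_if_norm_minimal min) (simp add: add conj_hom L)
  have "0 < (hnorm ip L)^2"
    using L \<phi>.zero hnorm_nonneg[of L] by (cases "L = 0") auto
  show ?thesis
  proof (intro exI allI)
    fix x
    have "ip L (x - sc (cnj (\<phi> x)) L) = 0"
      by (rule orth) (simp add: \<phi>.diff conj_hom L)
    then have "ip L x = cnj (\<phi> x) * of_real ((hnorm ip L)^2)"
      by (simp add: ip_diff_right ip_sc_right ip_self_eq_hnorm_sq)
    then have "ip x L = \<phi> x * of_real ((hnorm ip L)^2)"
      using arg_cong[of _ _ cnj] ip_conj_sym[of L x]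
      by (metis complex_cnj_cnj complex_cnj_mult complex_cnj_complex_of_real)
    then show "\<phi> x = ip x (sc (of_real (1 / (hnorm ip L)^2)) L)"
      using \<open>0 < (hnorm ip L)^2\<close> by (simp add: ip_sc_right)
  qed
qed

lemma bounded_op_zero: "bounded_op sc ip A \<Longrightarrow> A 0 = 0"
  unfolding bounded_op_def by (metis add_cancel_right_right add_0)

lemma bounded_op_bound: "bounded_op sc ip A \<Longrightarrow> \<exists>K\<ge>0. \<forall>x. hnorm ip (A x) \<le> K * hnorm ip x"
  unfolding bounded_op_def
  by (metis abs_ge_self abs_ge_zero hnorm_nonneg mult_right_mono order_trans)

lemma bounded_op_comp:
  assumes A: "bounded_op sc ip A" and B: "bounded_op sc ip B"
  shows "bounded_op sc ip (A \<circ> B)"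
proof -
  obtain K K' where K: "K \<ge> 0" "\<And>x. hnorm ip (A x) \<le> K * hnorm ip x"
    and K': "\<And>x. hnorm ip (B x) \<le> K' * hnorm ip x"
    using bounded_op_bound[OF A] bounded_op_bound[OF B] by blast
  have "hnorm ip (A (B x)) \<le> (K * K') * hnorm ip x" for x
    using order_trans[OF K(2) mult_left_mono[OF K' K(1)]] by (simp add: mult.assoc)
  then show ?thesis
    using A B unfolding bounded_op_def by auto
qed

lemma bounded_op_zero_op: "bounded_op sc ip (\<lambda>_. 0)"
  unfolding bounded_op_def by (auto intro: exI[of _ 0])

lemma bounded_op_if_adjoint:
  assumes A: "bounded_op sc ip A" and B: "\<And>x y. ip (A x) y = ip x (B y)"
  shows "bounded_op sc ip B"
  unfolding bounded_op_def
proof (intro conjI allI)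
  show "B (y + z) = B y + B z" for y z
    by (rule ip_ext) (simp add: B[symmetric] ip_add_right)
  show "B (sc c y) = sc c (B y)" for c y
    by (rule ip_ext) (simp add: B[symmetric] ip_sc_right)
  obtain K where K: "K \<ge> 0" "\<And>x. hnorm ip (A x) \<le> K * hnorm ip x"
    using bounded_op_bound[OF A] by blast
  have "hnorm ip (B y) \<le> K * hnorm ip y" for y
  proof (cases "B y = 0")
    case True
    then show ?thesis using K(1) by (simp add: hnorm_nonneg)
  next
    case False
    then have pos: "0 < hnorm ip (B y)"
      using hnorm_nonneg[of "B y"] by (simp add: order_le_less)
    have "hnorm ip (B y) * hnorm ip (B y) = Re (ip (A (B y)) y)"
      by (simp add: B hnorm_sq flip: power2_eq_square)
    also have "\<dots> \<le> hnorm ip (A (B y)) * hnorm ip y"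
      using complex_Re_le_cmod cauchy_schwarz order_trans by blast
    also have "\<dots> \<le> (K * hnorm ip y) * hnorm ip (B y)"
      using mult_right_mono[OF K(2)[of "B y"] hnorm_nonneg[of y]] by (simp add: ac_simps)
    finally show ?thesis
      using pos by simp
  qed
  then show "\<exists>K. \<forall>y. hnorm ip (B y) \<le> K * hnorm ip y"
    by blast
qed

lemma has_adjoint:
  assumes A: "bounded_op sc ip A"
  shows "\<exists>B. bounded_op sc ip B \<and> (\<forall>x y. ip (A x) y = ip x (B y))"
proof -
  obtain K where K: "\<And>x. hnorm ip (A x) \<le> K * hnorm ip x"
    using bounded_op_bound[OF A] by blast
  have "\<exists>z. \<forall>x. ip (A x) y = ip x z" for y
  proof (rule riesz_representation)
    show "ip (A (x + x')) y = ip (A x) y + ip (A x') y" for x x'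
      using A by (simp add: bounded_op_def ip_add_left)
    show "ip (A (sc c x)) y = cnj c * ip (A x) y" for c x
      using A by (simp add: bounded_op_def ip_sc_left)
    show "cmod (ip (A x) y) \<le> (K * hnorm ip y) * hnorm ip x" for x
      using order_trans[OF cauchy_schwarz mult_right_mono[OF K hnorm_nonneg]]
      by (simp add: ac_simps)
  qed
  then obtain B where B: "\<And>x y. ip (A x) y = ip x (B y)"
    by metis
  then show ?thesis
    using bounded_op_if_adjoint[OF A] by blast
qed

lemma adj_bounded_op: "bounded_op sc ip A \<Longrightarrow> bounded_op sc ip (adj sc ip A)"
  unfolding adj_def by (rule someI2_ex[OF has_adjoint]) auto

lemma adj_ip: "bounded_op sc ip A \<Longrightarrow> ip (A x) y = ip x (adj sc ip A y)"
  unfolding adj_def by (rule someI2_ex[OF has_adjoint]) auto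

lemma adj_eqI:
  assumes "bounded_op sc ip A" and "\<And>x y. ip (A x) y = ip x (B y)"
  shows "adj sc ip A = B"
  using assms by (intro ext ip_ext) (simp flip: adj_ip)

lemma adj_comp:
  "bounded_op sc ip A \<Longrightarrow> bounded_op sc ip B \<Longrightarrow> adj sc ip (A \<circ> B) = adj sc ip B \<circ> adj sc ip A"
  by (rule adj_eqI) (simp_all add: bounded_op_comp adj_ip)

lemma adj_zero_op: "adj sc ip (\<lambda>_. 0) = (\<lambda>_. 0)"
  by (rule adj_eqI) (simp_all add: bounded_op_zero_op)

end

section \<open>Reversed and non-backtracking walks\<close>

definition revwalk :: "('e \<Rightarrow> 'e) \<Rightarrow> 'e list \<Rightarrow> 'e list" where
  "revwalk erev p = rev (map erev p)"

lemma revwalk_Nil [simp]: "revwalk erev [] = []"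
  by (simp add: revwalk_def)

lemma revwalk_Cons: "revwalk erev (a # p) = revwalk erev p @ [erev a]"
  by (simp add: revwalk_def)

lemma revwalk_snoc: "revwalk erev (p @ [a]) = erev a # revwalk erev p"
  by (simp add: revwalk_def)

lemma set_revwalk: "set (revwalk erev p) = erev ` set p"
  by (simp add: revwalk_def)

lemma revwalk_revwalk: "(\<And>a. erev (erev a) = a) \<Longrightarrow> revwalk erev (revwalk erev p) = p"
  by (induction p) (simp_all add: revwalk_def)

lemma non_backtracking_Nil [simp]: "non_backtracking erev []"
  by (simp add: non_backtracking_def)

lemma non_backtracking_Cons:
  "non_backtracking erev (a # p) \<longleftrightarrow> (p \<noteq> [] \<longrightarrow> hd p \<noteq> erev a) \<and> non_backtracking erev p"
  unfolding non_backtracking_def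
proof
  assume h: "\<forall>i. Suc i < length (a # p) \<longrightarrow> (a # p) ! Suc i \<noteq> erev ((a # p) ! i)"
  have "p \<noteq> [] \<longrightarrow> hd p \<noteq> erev a"
    using h[rule_format, of 0] by (auto simp: hd_conv_nth)
  moreover have "Suc i < length p \<longrightarrow> p ! Suc i \<noteq> erev (p ! i)" for i
    using h[rule_format, of "Suc i"] by simp
  ultimately show "(p \<noteq> [] \<longrightarrow> hd p \<noteq> erev a) \<and> (\<forall>i. Suc i < length p \<longrightarrow> p ! Suc i \<noteq> erev (p ! i))"
    by blast
next
  assume "(p \<noteq> [] \<longrightarrow> hd p \<noteq> erev a) \<and> (\<forall>i. Suc i < length p \<longrightarrow> p ! Suc i \<noteq> erev (p ! i))"
  then show "\<forall>i. Suc i < length (a # p) \<longrightarrow> (a # p) ! Suc i \<noteq> erev ((a # p) ! i)"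
    by (auto simp: hd_conv_nth nth_Cons split: nat.split)
qed

lemma non_backtracking_append:
  "non_backtracking erev (p @ q) \<longleftrightarrow> non_backtracking erev p \<and> non_backtracking erev q \<and>
     (p \<noteq> [] \<and> q \<noteq> [] \<longrightarrow> hd q \<noteq> erev (last p))"
  by (induction p rule: induct_list012) (auto simp: non_backtracking_Cons)

lemma non_backtracking_revwalk:
  assumes "\<And>a. erev (erev a) = a" and "non_backtracking erev p"
  shows "non_backtracking erev (revwalk erev p)"
  using assms(2)
proof (induction p)
  case (Cons a p)
  then show ?case
    by (cases p) (auto simp: revwalk_Cons non_backtracking_Cons non_backtracking_append
        revwalk_def last_rev hd_map assms(1))
qed simp

lemma cas_arcs_update: "pre_digraph.cas (G\<lparr>arcs := T\<rparr>) x p y = pre_digraph.cas G x p y"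
  by (induction p arbitrary: x) (simp_all add: pre_digraph.cas.simps)

lemma awalk_arcs_update_iff:
  "T \<subseteq> arcs G \<Longrightarrow>
     pre_digraph.awalk (G\<lparr>arcs := T\<rparr>) x p y \<longleftrightarrow> pre_digraph.awalk G x p y \<and> set p \<subseteq> T"
  by (auto simp: pre_digraph.awalk_def cas_arcs_update)

context wf_digraph
begin

lemma awalk_append_conv: "awalk u (p @ q) w \<longleftrightarrow> (\<exists>v. awalk u p v \<and> awalk v q w)"
  by (auto intro: awalk_appendI)

lemma awalk_snoc_iff: "awalk u (p @ [a]) w \<longleftrightarrow> awalk u p (tail G a) \<and> a \<in> arcs G \<and> head G a = w"
  by (auto simp: awalk_append_conv awalk_Cons_iff awalk_Nil_iff)

end

context bidirected_digraph
begin

lemma awalk_revwalk: "awalk x p y \<Longrightarrow> awalk y (revwalk arev p) x"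
proof (induction p arbitrary: x)
  case (Cons a p)
  then show ?case
    by (auto simp: revwalk_Cons awalk_Cons_iff awalk_snoc_iff simp del: awalk_append_iff)
qed (simp add: awalk_Nil_iff)

lemma non_backtracking_reduction:
  "awalk x p y \<Longrightarrow> \<exists>q. awalk x q y \<and> set q \<subseteq> set p \<and> non_backtracking arev q"
proof (induction "length p" arbitrary: p rule: less_induct)
  case less
  show ?case
  proof (cases "non_backtracking arev p")
    case True
    then show ?thesis using less.prems by blast
  next
    case False
    then obtain i where i: "Suc i < length p" "p ! Suc i = arev (p ! i)"
      unfolding non_backtracking_def by blast
    define p' where "p' = take i p @ drop (Suc (Suc i)) p"
    have p: "p = take i p @ [p ! i, arev (p ! i)] @ drop (Suc (Suc i)) p"
      using i by (metis Cons_nth_drop_Suc Suc_lessD append_Cons append_Nil append_take_drop_id)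
    have "awalk x p' y"
      using less.prems by (subst (asm) p) (auto simp: p'_def awalk_append_conv awalk_Cons_iff)
    moreover have "set p' \<subseteq> set p"
      by (auto simp: p'_def dest: in_set_takeD in_set_dropD)
    moreover have "length p' < length p"
      using i by (simp add: p'_def)
    ultimately show ?thesis
      using less.hyps by (meson order_trans)
  qed
qed

end

section \<open>Paths in spanning trees\<close>

locale spanning_tree = bidirected_digraph G erev for G :: "('v,'e) pre_digraph" and erev +
  fixes T :: "'e set"
  assumes spanning: "is_spanning_tree G erev T"
begin

lemma tree_arcs: "T \<subseteq> arcs G"
  using spanning by (simp add: is_spanning_tree_def)

lemma tree_arev: "a \<in> T \<Longrightarrow> erev a \<in> T"
  using spanning by (simp add: is_spanning_tree_def)

lemma tree_awalk_iff: "pre_digraph.awalk (G\<lparr>arcs := T\<rparr>) x p y \<longleftrightarrow> awalk x p y \<and> set p \<subseteq> T"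
  by (rule awalk_arcs_update_iff[OF tree_arcs])

lemma tree_no_cycle: "awalk u p u \<Longrightarrow> set p \<subseteq> T \<Longrightarrow> non_backtracking erev p \<Longrightarrow> p = []"
  using spanning unfolding is_spanning_tree_def tree_awalk_iff by blast

lemma tree_walk_exists:
  assumes "x \<in> verts G" and "y \<in> verts G"
  shows "\<exists>p. awalk x p y \<and> set p \<subseteq> T"
proof -
  define S where "S = G\<lparr>arcs := T\<rparr>"
  interpret S: wf_digraph S
    using tree_arcs by unfold_locales (auto simp: S_def)
  have "symmetric S"
    unfolding symmetric_def
  proof (rule symI)
    fix u v
    assume "(u, v) \<in> arcs_ends S"
    then obtain a where "a \<in> T" "u = tail G a" "v = head G a"
      by (auto simp: arcs_ends_def arc_to_ends_def S_def)
    then show "(v, u) \<in> arcs_ends S"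
      using tree_arev tree_arcs unfolding arcs_ends_def arc_to_ends_def S_def
      by (auto intro!: image_eqI[of _ _ "erev a"])
  qed
  have "x \<rightarrow>\<^sup>*\<^bsub>mk_symmetric S\<^esub> y"
    using spanning assms unfolding is_spanning_tree_def connected_def strongly_connected_def S_def
    by simp
  then have "x \<rightarrow>\<^sup>*\<^bsub>S\<^esub> y"
    using S.reachable_mk_symmetric_eq[OF \<open>symmetric S\<close>] by blast
  then show ?thesis
    using S.reachable_awalk tree_awalk_iff unfolding S_def by blast
qed

text \<open>Two different last arcs would close up into a non-backtracking cycle in the tree.\<close>

lemma tree_walk_unique:
  "\<lbrakk>awalk x p y; set p \<subseteq> T; non_backtracking erev p;
    awalk x q y; set q \<subseteq> T; non_backtracking erev q\<rbrakk> \<Longrightarrow> p = q"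
proof (induction p arbitrary: q y rule: rev_induct)
  case Nil
  then show ?case
    using tree_no_cycle[of x q] by (auto simp: awalk_Nil_iff)
next
  case (snoc a p)
  show ?case
  proof (cases q rule: rev_exhaust)
    case Nil
    then show ?thesis
      using snoc.prems tree_no_cycle[of x "p @ [a]"] by (simp add: awalk_Nil_iff)
  next
    case (snoc q' b)
    show ?thesis
    proof (cases "a = b")
      case True
      then have "p = q'"
        using snoc.IH[of "tail G a" q'] snoc.prems \<open>q = q' @ [b]\<close>
        by (simp add: awalk_snoc_iff non_backtracking_append del: awalk_append_iff)
      then show ?thesis
        using True \<open>q = q' @ [b]\<close> by simp
    next
      case False
      have "awalk x ((p @ [a]) @ revwalk erev q) x"
        using awalk_appendI[OF snoc.prems(1) awalk_revwalk[OF snoc.prems(4)]] .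
      moreover have "non_backtracking erev ((p @ [a]) @ revwalk erev q)"
        using snoc.prems non_backtracking_revwalk[OF arev_arev snoc.prems(6)] False
        by (auto simp: non_backtracking_append non_backtracking_Cons \<open>q = q' @ [b]\<close> revwalk_snoc
            dest: arg_cong[of _ _ erev])
      moreover have "set ((p @ [a]) @ revwalk erev q) \<subseteq> T"
        using snoc.prems tree_arev by (auto simp: set_revwalk)
      ultimately show ?thesis
        using tree_no_cycle by blast
    qed
  qed
qed

lemma tree_path:
  assumes "x \<in> verts G" and "y \<in> verts G"
  shows "awalk x (tree_path G erev T x y) y \<and> set (tree_path G erev T x y) \<subseteq> T \<and>
         non_backtracking erev (tree_path G erev T x y)"
proof -
  have "\<exists>!p. awalk x p y \<and> set p \<subseteq> T \<and> non_backtracking erev p"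
    using tree_walk_exists[OF assms] non_backtracking_reduction tree_walk_unique by (metis order_trans)
  then show ?thesis
    unfolding tree_path_def tree_awalk_iff conj_assoc by (rule theI')
qed

lemma tree_path_eqI:
  assumes "awalk x p y" and "set p \<subseteq> T" and "non_backtracking erev p"
  shows "tree_path G erev T x y = p"
proof -
  have "x \<in> verts G" "y \<in> verts G"
    using assms(1) by (auto dest: awalk_hd_in_verts awalk_last_in_verts)
  then show ?thesis
    using tree_path tree_walk_unique[OF _ _ _ assms] by blast
qed

lemma tree_path_revwalk:
  "x \<in> verts G \<Longrightarrow> y \<in> verts G \<Longrightarrow> tree_path G erev T y x = revwalk erev (tree_path G erev T x y)"
  using tree_path[of x y] tree_arev
  by (intro tree_path_eqI) (auto simp: awalk_revwalk set_revwalk non_backtracking_revwalk)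

end

section \<open>Monomial matrices\<close>

lemma sum_permutes_select:
  fixes g :: "nat \<Rightarrow> 'a::comm_monoid_add"
  assumes \<sigma>: "\<sigma> permutes {..<k}" and "i < k"
  shows "(\<Sum>l<k. if \<sigma> l = i then g l else 0) = g (inv \<sigma> i)"
proof -
  have "inv \<sigma> i < k"
    using permutes_in_image[OF permutes_inv[OF \<sigma>]] assms(2) by simp
  moreover have "\<sigma> l = i \<longleftrightarrow> l = inv \<sigma> i" for l
    using permutes_inv_eq[OF \<sigma>] by metis
  ultimately show ?thesis
    by simp
qed

lemma relabelling_permutation:
  assumes f: "bij_betw f A B" and g: "bij_betw g A B"
  obtains \<sigma> where "\<sigma> permutes A" and "\<And>i. i \<in> A \<Longrightarrow> f (inv \<sigma> i) = g i"
proof -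
  define \<pi> where "\<pi> i = (if i \<in> A then the_inv_into A f (g i) else i)" for i
  have "bij_betw (the_inv_into A f \<circ> g) A A"
    using bij_betw_trans[OF g bij_betw_the_inv_into[OF f]] .
  then have "bij_betw \<pi> A A"
    by (rule bij_betw_cong[THEN iffD1, rotated]) (simp add: \<pi>_def)
  then have \<pi>: "\<pi> permutes A"
    by (rule bij_imp_permutes) (simp add: \<pi>_def)
  moreover have "f (\<pi> i) = g i" if "i \<in> A" for i
    using that f g by (simp add: \<pi>_def f_the_inv_into_f_bij_betw bij_betwE)
  ultimately show thesis
    using that[of "inv \<pi>"] permutes_inv[OF \<pi>] inv_inv_eq[OF permutes_bij[OF \<pi>]] by simp
qed

context hilbert_space
begin

lemma monomial_mat_entry:
  assumes "i < k" and "D i \<circ> P r = D i" and "D i 0 = 0"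
  shows "mat_mult k (diag_mat D) (perm_mat P r \<sigma>) i j = (if \<sigma> j = i then D i else (\<lambda>_. 0))"
proof
  fix x
  have "mat_mult k (diag_mat D) (perm_mat P r \<sigma>) i j x = (\<Sum>l<k. if l = i then D i (perm_mat P r \<sigma> i j x) else 0)"
    unfolding mat_mult_def diag_mat_def by (intro sum.cong) auto
  also have "\<dots> = (if \<sigma> j = i then D i else (\<lambda>_. 0)) x"
    using fun_cong[OF assms(2), of x] assms(1,3) by (simp add: perm_mat_def)
  finally show "mat_mult k (diag_mat D) (perm_mat P r \<sigma>) i j x = (if \<sigma> j = i then D i else (\<lambda>_. 0)) x" .
qed

context
  fixes k :: nat and \<sigma> :: "nat \<Rightarrow> nat" and D :: "nat \<Rightarrow> 'h \<Rightarrow> 'h" and e :: "'h \<Rightarrow> 'h"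
    and M :: "'h opmat"
  assumes \<sigma>: "\<sigma> permutes {..<k}"
    and D: "\<And>i. i < k \<Longrightarrow> bounded_op sc ip (D i)"
    and M: "\<And>i j. i < k \<Longrightarrow> M i j = (if \<sigma> j = i then D i else (\<lambda>_. 0))"
begin

lemma monomial_mat_adj_entry:
  "i < k \<Longrightarrow> adj sc ip (M i j) = (if \<sigma> j = i then adj sc ip (D i) else (\<lambda>_. 0))"
  using M by (simp add: adj_zero_op)

lemma monomial_mat_unitary:
  assumes U: "\<And>i. i < k \<Longrightarrow> D i \<circ> adj sc ip (D i) = e \<and> adj sc ip (D i) \<circ> D i = e"
  shows "mat_eq k (mat_mult k M (mat_adj sc ip M)) (\<lambda>i j. if i = j then e else (\<lambda>_. 0))"
    and "mat_eq k (mat_mult k (mat_adj sc ip M) M) (\<lambda>i j. if i = j then e else (\<lambda>_. 0))"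
proof -
  have \<sigma>_lt: "i < k \<Longrightarrow> \<sigma> i < k" for i
    using permutes_in_image[OF \<sigma>] by simp
  show "mat_eq k (mat_mult k M (mat_adj sc ip M)) (\<lambda>i j. if i = j then e else (\<lambda>_. 0))"
    unfolding mat_eq_def mat_mult_def mat_adj_def
  proof (intro allI impI ext)
    fix i j x assume i: "i < k" and j: "j < k"
    have "(\<Sum>l<k. M i l (adj sc ip (M j l) x)) =
        (\<Sum>l<k. if \<sigma> l = i then (if \<sigma> l = j then D i (adj sc ip (D j) x) else 0) else 0)"
      using D[OF i] by (intro sum.cong) (auto simp: M[OF i] monomial_mat_adj_entry[OF j] bounded_op_zero)
    also have "\<dots> = (if i = j then e else (\<lambda>_. 0)) x"
      unfolding sum_permutes_select[OF \<sigma> i] using fun_cong[OF conjunct1[OF U[OF i]], of x]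
      by (cases "i = j") (simp_all add: permutes_inverses[OF \<sigma>])
    finally show "(\<Sum>l<k. M i l (adj sc ip (M j l) x)) = (if i = j then e else (\<lambda>_. 0)) x" .
  qed
  show "mat_eq k (mat_mult k (mat_adj sc ip M) M) (\<lambda>i j. if i = j then e else (\<lambda>_. 0))"
    unfolding mat_eq_def mat_mult_def mat_adj_def
  proof (intro allI impI ext)
    fix i j x assume i: "i < k" and j: "j < k"
    have "(\<Sum>l<k. adj sc ip (M l i) (M l j x)) =
        (\<Sum>l<k. if \<sigma> i = l then (if i = j then adj sc ip (D l) (D l x) else 0) else 0)"
      using D adj_bounded_op permutes_inj[OF \<sigma>]
      by (intro sum.cong) (auto simp: M monomial_mat_adj_entry bounded_op_zero adj_zero_op dest: injD)
    also have "\<dots> = (if i = j then e else (\<lambda>_. 0)) x"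
      using \<sigma>_lt[OF i] fun_cong[OF conjunct2[OF U[OF \<sigma>_lt[OF i]]], of x] by (cases "i = j") simp_all
    finally show "(\<Sum>l<k. adj sc ip (M l i) (M l j x)) = (if i = j then e else (\<lambda>_. 0)) x" .
  qed
qed

lemma monomial_mat_conjugation:
  assumes A: "\<And>l m. l < k \<Longrightarrow> m < k \<Longrightarrow> A l m 0 = 0"
  shows "mat_eq k (mat_mult k (mat_mult k M A) (mat_adj sc ip M))
                  (\<lambda>i j. D i \<circ> A (inv \<sigma> i) (inv \<sigma> j) \<circ> adj sc ip (D j))"
  unfolding mat_eq_def
proof (intro allI impI ext)
  fix i j x assume i: "i < k" and j: "j < k"
  have inv_lt: "inv \<sigma> i < k"
    using permutes_in_image[OF permutes_inv[OF \<sigma>]] i by simp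
  have MA: "mat_mult k M A i m y = D i (A (inv \<sigma> i) m y)" for m y
  proof -
    have "mat_mult k M A i m y = (\<Sum>l<k. if \<sigma> l = i then D i (A l m y) else 0)"
      unfolding mat_mult_def using D[OF i] by (intro sum.cong) (simp_all add: M[OF i] bounded_op_zero)
    then show ?thesis
      by (simp add: sum_permutes_select[OF \<sigma> i])
  qed
  have "mat_mult k (mat_mult k M A) (mat_adj sc ip M) i j x =
      (\<Sum>m<k. if \<sigma> m = j then D i (A (inv \<sigma> i) m (adj sc ip (D j) x)) else 0)"
    unfolding mat_mult_def[of k "mat_mult k M A"] mat_adj_def
    using D[OF i] A[OF inv_lt]
    by (intro sum.cong) (auto simp: MA monomial_mat_adj_entry[OF j] bounded_op_zero)
  also have "\<dots> = (D i \<circ> A (inv \<sigma> i) (inv \<sigma> j) \<circ> adj sc ip (D j)) x"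
    by (simp add: sum_permutes_select[OF \<sigma> j])
  finally show "mat_mult k (mat_mult k M A) (mat_adj sc ip M) i j x =
      (D i \<circ> A (inv \<sigma> i) (inv \<sigma> j) \<circ> adj sc ip (D j)) x" .
qed

end

lemma monomial_gauge_transformation:
  fixes P :: "'v \<Rightarrow> 'h \<Rightarrow> 'h" and D :: "nat \<Rightarrow> 'h \<Rightarrow> 'h" and H H' :: "'h opmat"
  assumes \<sigma>: "\<sigma> permutes {..<k}"
    and D: "\<And>i. i < k \<Longrightarrow> unitary_in sc ip A (P r) (D i) \<and> bounded_op sc ip (D i) \<and> D i \<circ> P r = D i"
    and zero: "(\<lambda>_. 0) \<in> A"
    and H_zero: "\<And>l m. l < k \<Longrightarrow> m < k \<Longrightarrow> H l m 0 = 0"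
    and conj: "\<And>i j. i < k \<Longrightarrow> j < k \<Longrightarrow> D i \<circ> H (inv \<sigma> i) (inv \<sigma> j) \<circ> adj sc ip (D j) = H' i j"
  shows "\<exists>M. (\<forall>i<k. \<forall>j<k. M i j \<in> A) \<and>
             mat_eq k (mat_mult k M (mat_adj sc ip M)) (mat_id P r) \<and>
             mat_eq k (mat_mult k (mat_adj sc ip M) M) (mat_id P r) \<and>
             mat_eq k (mat_mult k (mat_mult k M H) (mat_adj sc ip M)) H' \<and>
             (\<exists>D \<sigma>. \<sigma> permutes {..<k} \<and> (\<forall>i<k. unitary_in sc ip A (P r) (D i)) \<and>
                    mat_eq k M (mat_mult k (diag_mat D) (perm_mat P r \<sigma>)))"
proof -
  have D_bounded: "bounded_op sc ip (D i)"
    and D_unitary: "D i \<circ> adj sc ip (D i) = P r \<and> adj sc ip (D i) \<circ> D i = P r" if "i < k" for i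
    using D[OF that] by (simp_all add: unitary_in_def)
  define M where "M = mat_mult k (diag_mat D) (perm_mat P r \<sigma>)"
  have M: "M i j = (if \<sigma> j = i then D i else (\<lambda>_. 0))" if "i < k" for i j
    unfolding M_def using D[OF that] by (intro monomial_mat_entry[OF that]) (simp_all add: bounded_op_zero)
  show ?thesis
  proof (intro exI[of _ M] conjI)
    show "\<forall>i<k. \<forall>j<k. M i j \<in> A"
      using D zero by (simp add: M unitary_in_def)
    show "mat_eq k (mat_mult k M (mat_adj sc ip M)) (mat_id P r)"
      unfolding mat_id_def by (rule monomial_mat_unitary(1)[OF \<sigma> D_bounded M D_unitary])
    show "mat_eq k (mat_mult k (mat_adj sc ip M) M) (mat_id P r)"
      unfolding mat_id_def by (rule monomial_mat_unitary(2)[OF \<sigma> D_bounded M D_unitary])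
    show "mat_eq k (mat_mult k (mat_mult k M H) (mat_adj sc ip M)) H'"
      using monomial_mat_conjugation[where A = H, OF \<sigma> D_bounded M H_zero] conj
      by (simp add: mat_eq_def)
    show "\<exists>D \<sigma>. \<sigma> permutes {..<k} \<and> (\<forall>i<k. unitary_in sc ip A (P r) (D i)) \<and>
        mat_eq k M (mat_mult k (diag_mat D) (perm_mat P r \<sigma>))"
      using \<sigma> D by (auto simp: M_def mat_eq_def)
  qed
qed

end

section \<open>Groupoid representations\<close>

lemma foldl_comp_right:
  "foldl (\<lambda>A f. U f \<circ> A) (X \<circ> Y) q = foldl (\<lambda>A f. U f \<circ> A) X q \<circ> Y"
  by (induction q arbitrary: X) (simp_all add: comp_assoc[symmetric])

locale groupoid_representation = bidirected_digraph G erev for G :: "('v,'e) pre_digraph" and erev +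
  fixes sc :: "complex \<Rightarrow> 'h::ab_group_add \<Rightarrow> 'h" and ip :: "'h \<Rightarrow> 'h \<Rightarrow> complex"
    and P :: "'v \<Rightarrow> 'h \<Rightarrow> 'h" and U :: "'e \<Rightarrow> 'h \<Rightarrow> 'h"
  assumes rep: "groupoid_rep sc ip G erev P U"
begin

sublocale hilbert_space sc ip
  using rep unfolding groupoid_rep_def by (elim conjE) (rule complex_hilbert_imp_hilbert_space)

lemma rep_verts:
  "\<forall>v\<in>verts G. bounded_op sc ip (P v) \<and> P v \<circ> P v = P v \<and> adj sc ip (P v) = P v \<and>
     separable_set ip (range (P v))"
  using rep unfolding groupoid_rep_def by (elim conjE) assumption

lemma rep_arcs:
  "\<forall>f\<in>arcs G. bounded_op sc ip (U f) \<and> U f = P (head G f) \<circ> U f \<circ> P (tail G f) \<and>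
     adj sc ip (U f) \<circ> U f = P (tail G f) \<and> U f \<circ> adj sc ip (U f) = P (head G f) \<and>
     U (erev f) = adj sc ip (U f)"
  using rep unfolding groupoid_rep_def by (elim conjE) assumption

lemma P_idem: "v \<in> verts G \<Longrightarrow> P v \<circ> P v = P v"
  using rep_verts by blast

lemma P_adj: "v \<in> verts G \<Longrightarrow> adj sc ip (P v) = P v"
  using rep_verts by blast

lemma P_bounded_op: "v \<in> verts G \<Longrightarrow> bounded_op sc ip (P v)"
  using rep_verts by blast

lemma U_bounded_op: "f \<in> arcs G \<Longrightarrow> bounded_op sc ip (U f)"
  using rep_arcs by blast

lemma U_support: "f \<in> arcs G \<Longrightarrow> U f = P (head G f) \<circ> U f \<circ> P (tail G f)"
  using rep_arcs by blast

lemma U_isometry: "f \<in> arcs G \<Longrightarrow> adj sc ip (U f) \<circ> U f = P (tail G f)"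
  using rep_arcs by blast

lemma U_arev: "f \<in> arcs G \<Longrightarrow> U (erev f) = adj sc ip (U f)"
  using rep_arcs by blast

lemma P_head_U:
  assumes "f \<in> arcs G"
  shows "P (head G f) \<circ> U f = U f"
proof -
  have "P (head G f) \<circ> U f = (P (head G f) \<circ> P (head G f)) \<circ> U f \<circ> P (tail G f)"
    by (subst U_support[OF assms]) (simp add: comp_assoc)
  also have "\<dots> = U f"
    using assms by (simp add: P_idem flip: U_support)
  finally show ?thesis .
qed

lemma U_P_tail:
  assumes "f \<in> arcs G"
  shows "U f \<circ> P (tail G f) = U f"
proof -
  have "U f \<circ> P (tail G f) = P (head G f) \<circ> U f \<circ> (P (tail G f) \<circ> P (tail G f))"
    by (subst U_support[OF assms]) (simp add: comp_assoc)
  also have "\<dots> = P (head G f) \<circ> U f \<circ> P (tail G f)"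
    using assms by (simp add: P_idem)
  also have "\<dots> = U f"
    by (rule U_support[OF assms, symmetric])
  finally show ?thesis .
qed

lemma Uwalk_Nil: "Uwalk P U x [] = P x"
  by (simp add: Uwalk_def)

lemma Uwalk_snoc: "Uwalk P U x (p @ [f]) = U f \<circ> Uwalk P U x p"
  by (simp add: Uwalk_def)

lemma Uwalk_Cons:
  assumes "f \<in> arcs G" and "tail G f = x"
  shows "Uwalk P U x (f # q) = Uwalk P U (head G f) q \<circ> U f"
proof -
  have "U f \<circ> P x = P (head G f) \<circ> U f"
    using U_P_tail[OF assms(1)] P_head_U[OF assms(1)] assms(2) by simp
  then show ?thesis
    by (simp add: Uwalk_def foldl_comp_right)
qed

lemma Uwalk_P: "x \<in> verts G \<Longrightarrow> Uwalk P U x q \<circ> P x = Uwalk P U x q"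
  unfolding Uwalk_def by (simp add: P_idem flip: foldl_comp_right)

lemma Uwalk_append: "awalk x p y \<Longrightarrow> Uwalk P U x (p @ q) = Uwalk P U y q \<circ> Uwalk P U x p"
proof (induction p arbitrary: x)
  case Nil
  then have "x = y" "x \<in> verts G"
    by (auto simp: awalk_Nil_iff)
  then show ?case by (simp add: Uwalk_Nil Uwalk_P)
next
  case (Cons a p)
  then have a: "a \<in> arcs G" "tail G a = x" "awalk (head G a) p y"
    by (auto simp: awalk_Cons_iff)
  show ?case
    unfolding append_Cons Uwalk_Cons[OF a(1,2)] Cons.IH[OF a(3)] by (simp only: comp_assoc)
qed

lemma Uwalk_bounded_op: "awalk x p y \<Longrightarrow> bounded_op sc ip (Uwalk P U x p)"
proof (induction p arbitrary: x)
  case Nil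
  then show ?case by (auto simp: awalk_Nil_iff Uwalk_Nil P_bounded_op)
next
  case (Cons a p)
  then have a: "a \<in> arcs G" "tail G a = x" "awalk (head G a) p y"
    by (auto simp: awalk_Cons_iff)
  show ?case
    unfolding Uwalk_Cons[OF a(1,2)] by (rule bounded_op_comp[OF Cons.IH[OF a(3)] U_bounded_op[OF a(1)]])
qed

lemma Uwalk_adj: "awalk x p y \<Longrightarrow> adj sc ip (Uwalk P U x p) = Uwalk P U y (revwalk erev p)"
proof (induction p arbitrary: x)
  case Nil
  then show ?case
    by (auto simp: awalk_Nil_iff Uwalk_Nil P_adj)
next
  case (Cons a p)
  then have a: "a \<in> arcs G" "tail G a = x" "awalk (head G a) p y"
    by (auto simp: awalk_Cons_iff)
  have "adj sc ip (Uwalk P U (head G a) p \<circ> U a) = adj sc ip (U a) \<circ> adj sc ip (Uwalk P U (head G a) p)"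
    by (rule adj_comp[OF Uwalk_bounded_op[OF a(3)] U_bounded_op[OF a(1)]])
  also have "\<dots> = U (erev a) \<circ> Uwalk P U y (revwalk erev p)"
    by (simp only: Cons.IH[OF a(3)] U_arev[OF a(1)])
  also have "\<dots> = Uwalk P U y (revwalk erev (a # p))"
    by (simp only: revwalk_Cons Uwalk_snoc)
  finally show ?case
    unfolding Uwalk_Cons[OF a(1,2)] .
qed

lemma Uwalk_revwalk_cancel: "awalk x p y \<Longrightarrow> Uwalk P U y (revwalk erev p) \<circ> Uwalk P U x p = P x"
proof (induction p arbitrary: x)
  case Nil
  then have "x = y" "x \<in> verts G"
    by (auto simp: awalk_Nil_iff)
  then show ?case by (simp add: Uwalk_Nil P_idem)
next
  case (Cons a p)
  then have a: "a \<in> arcs G" "tail G a = x" "awalk (head G a) p y"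
    by (auto simp: awalk_Cons_iff)
  note IH = Cons.IH[OF a(3)]
  have "Uwalk P U y (revwalk erev (a # p)) \<circ> Uwalk P U x (a # p)
      = U (erev a) \<circ> (Uwalk P U y (revwalk erev p) \<circ> Uwalk P U (head G a) p) \<circ> U a"
    using a by (simp add: revwalk_Cons Uwalk_snoc Uwalk_Cons comp_assoc)
  also have "\<dots> = adj sc ip (U a) \<circ> U a"
    using a by (simp add: IH U_arev P_head_U comp_assoc)
  finally show ?case
    using a by (simp add: U_isometry)
qed

lemma Uwalk_in_Aalg: "awalk r p r \<Longrightarrow> Uwalk P U r p \<in> Aalg sc ip G P U r"
  unfolding Aalg_def cstar_gen_def by blast

lemma zero_in_Aalg:
  assumes "r \<in> verts G"
  shows "(\<lambda>_. 0) \<in> Aalg sc ip G P U r"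
proof -
  have "P r \<in> Aalg sc ip G P U r"
    using Uwalk_in_Aalg[of r "[]"] assms by (simp add: awalk_Nil_iff Uwalk_Nil)
  then have "(\<lambda>x. sc 0 (P r x)) \<in> Aalg sc ip G P U r"
    unfolding Aalg_def cstar_gen_def by (simp only: Inter_iff mem_Collect_eq) blast
  then show ?thesis
    by simp
qed

lemma closed_walk_unitary:
  assumes "awalk r p r"
  shows "unitary_in sc ip (Aalg sc ip G P U r) (P r) (Uwalk P U r p)"
  using Uwalk_in_Aalg[OF assms] Uwalk_revwalk_cancel[OF assms]
    Uwalk_revwalk_cancel[OF awalk_revwalk[OF assms]]
  by (simp add: unitary_in_def Uwalk_adj[OF assms] revwalk_revwalk)

lemma Hcomp_P: "Hcomp G U u w \<circ> P w = Hcomp G U u w"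
proof
  fix x
  show "(Hcomp G U u w \<circ> P w) x = Hcomp G U u w x"
    unfolding Hcomp_def comp_def using fun_cong[OF U_P_tail] by (intro sum.cong) auto
qed

lemma Hcomp_zero: "Hcomp G U u w 0 = 0"
  unfolding Hcomp_def by (rule sum.neutral) (auto simp: bounded_op_zero U_bounded_op)

context
  fixes T :: "'e set"
  assumes T: "is_spanning_tree G erev T"
begin

interpretation spanning_tree G erev T
  by unfold_locales (rule T)

lemma Utree_awalk: "x \<in> verts G \<Longrightarrow> y \<in> verts G \<Longrightarrow> awalk x (tree_path G erev T x y) y"
  using tree_path by blast

lemma Utree_bounded_op:
  "x \<in> verts G \<Longrightarrow> y \<in> verts G \<Longrightarrow> bounded_op sc ip (Utree G erev P U T y x)"
  unfolding Utree_def by (rule Uwalk_bounded_op[OF Utree_awalk])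

lemma Utree_adj:
  "x \<in> verts G \<Longrightarrow> y \<in> verts G \<Longrightarrow> adj sc ip (Utree G erev P U T y x) = Utree G erev P U T x y"
  unfolding Utree_def by (simp add: Uwalk_adj[OF Utree_awalk] tree_path_revwalk[of x y])

lemma Utree_cancel:
  "x \<in> verts G \<Longrightarrow> y \<in> verts G \<Longrightarrow> Utree G erev P U T y x \<circ> Utree G erev P U T x y = P y"
  unfolding Utree_def by (simp add: tree_path_revwalk[of y x] Uwalk_revwalk_cancel[OF Utree_awalk])

lemma Utree_P: "x \<in> verts G \<Longrightarrow> Utree G erev P U T y x \<circ> P x = Utree G erev P U T y x"
  unfolding Utree_def by (rule Uwalk_P)

lemma mat_ham_zero:
  assumes "r \<in> verts G" and "\<And>i. i < k \<Longrightarrow> ord i \<in> verts G" and "l < k" and "m < k"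
  shows "mat_ham G erev P U T r ord l m 0 = 0"
  using assms by (simp add: mat_ham_def Hcomp_zero bounded_op_zero Utree_bounded_op)

end

definition tree_holonomy :: "'e set \<Rightarrow> 'e set \<Rightarrow> 'v \<Rightarrow> 'v \<Rightarrow> 'v \<Rightarrow> 'h \<Rightarrow> 'h" where
  "tree_holonomy T T' r r' u =
     Utree G erev P U T r r' \<circ> Utree G erev P U T' r' u \<circ> Utree G erev P U T u r"

context
  fixes T T' :: "'e set" and r r' :: 'v
  assumes T: "is_spanning_tree G erev T" and T': "is_spanning_tree G erev T'"
    and r: "r \<in> verts G" and r': "r' \<in> verts G"
begin

lemma tree_holonomy_Uwalk:
  assumes "u \<in> verts G"
  shows "\<exists>p. awalk r p r \<and> tree_holonomy T T' r r' u = Uwalk P U r p"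
proof -
  define p1 p2 p3 where "p1 = tree_path G erev T r u" and "p2 = tree_path G erev T' u r'"
    and "p3 = tree_path G erev T r' r"
  have walks: "awalk r p1 u" "awalk u p2 r'" "awalk r' p3 r"
    unfolding p1_def p2_def p3_def using Utree_awalk T T' r r' assms by blast+
  have "Uwalk P U r (p1 @ p2 @ p3) = Uwalk P U r' p3 \<circ> Uwalk P U u p2 \<circ> Uwalk P U r p1"
    by (simp only: Uwalk_append[OF walks(1)] Uwalk_append[OF walks(2)] comp_assoc)
  also have "\<dots> = tree_holonomy T T' r r' u"
    by (simp add: tree_holonomy_def Utree_def p1_def p2_def p3_def)
  finally show ?thesis
    using walks by (auto intro!: exI[of _ "p1 @ p2 @ p3"] awalk_appendI)
qed

lemma tree_holonomy_unitary:
  assumes "u \<in> verts G"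
  shows "unitary_in sc ip (Aalg sc ip G P U r) (P r) (tree_holonomy T T' r r' u) \<and>
    bounded_op sc ip (tree_holonomy T T' r r' u) \<and>
    tree_holonomy T T' r r' u \<circ> P r = tree_holonomy T T' r r' u"
proof -
  obtain p where p: "awalk r p r" "tree_holonomy T T' r r' u = Uwalk P U r p"
    using tree_holonomy_Uwalk[OF assms] by blast
  show ?thesis
    unfolding p(2) using closed_walk_unitary[OF p(1)] Uwalk_bounded_op[OF p(1)] Uwalk_P[OF r] by blast
qed

text \<open>The tree paths between r and u, and between r and w, cancel pairwise.\<close>

lemma tree_holonomy_conjugation:
  assumes u: "u \<in> verts G" and w: "w \<in> verts G"
  shows "tree_holonomy T T' r r' u \<circ>
           (Utree G erev P U T r u \<circ> Hcomp G U u w \<circ> Utree G erev P U T w r) \<circ>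
           adj sc ip (tree_holonomy T T' r r' w) =
         Utree G erev P U T r r' \<circ>
           (Utree G erev P U T' r' u \<circ> Hcomp G U u w \<circ> Utree G erev P U T' w r') \<circ>
           Utree G erev P U T r' r"
proof -
  let ?U = "Utree G erev P U T" and ?U' = "Utree G erev P U T'"
  have adj_w: "adj sc ip (tree_holonomy T T' r r' w) = ?U r w \<circ> ?U' w r' \<circ> ?U r' r"
    unfolding tree_holonomy_def
    by (simp add: adj_comp bounded_op_comp Utree_bounded_op Utree_adj T T' r r' w comp_assoc)
  have cancel_u: "?U u r \<circ> (?U r u \<circ> X) = P u \<circ> X" for X
    using Utree_cancel[OF T r u] by (simp add: comp_assoc[symmetric])
  have cancel_w: "?U w r \<circ> (?U r w \<circ> X) = P w \<circ> X" for X
    using Utree_cancel[OF T r w] by (simp add: comp_assoc[symmetric])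
  have absorb_u: "?U' r' u \<circ> (P u \<circ> X) = ?U' r' u \<circ> X" for X
    using Utree_P[OF T' u] by (simp add: comp_assoc[symmetric])
  have absorb_w: "Hcomp G U u w \<circ> (P w \<circ> X) = Hcomp G U u w \<circ> X" for X
    using Hcomp_P by (simp add: comp_assoc[symmetric])
  show ?thesis
    unfolding tree_holonomy_def adj_w[unfolded tree_holonomy_def]
    by (simp only: comp_assoc cancel_u cancel_w absorb_u absorb_w)
qed

end

end


lemma ordered_rooted_spanning_tree_root:
  assumes "fin_digraph G" and "connected G" and "ordered_rooted_spanning_tree G erev T r ord"
  shows "r \<in> verts G"
proof -
  have "verts G \<noteq> {}"
    using assms(2) by (auto simp: connected_def strongly_connected_def)
  then have "0 < card (verts G)"
    using assms(1) by (simp add: fin_digraph.finite_verts card_gt_0_iff)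
  then show ?thesis
    using assms(3) by (auto simp: ordered_rooted_spanning_tree_def dest: bij_betw_apply)
qed

theorem mainTheorem1:
  fixes sc :: "complex \<Rightarrow> 'h::ab_group_add \<Rightarrow> 'h" and ip :: "'h \<Rightarrow> 'h \<Rightarrow> complex"
    and G :: "('v,'e) pre_digraph" and erev :: "'e \<Rightarrow> 'e"
    and P :: "'v \<Rightarrow> 'h \<Rightarrow> 'h" and U :: "'e \<Rightarrow> 'h \<Rightarrow> 'h"
    and T T' :: "'e set" and r r' :: 'v and ord ord' :: "nat \<Rightarrow> 'v" and k :: nat
  assumes "fin_digraph G" and "bidirected_digraph G erev" and "connected G"
    and "k = card (verts G)"
    and "groupoid_rep sc ip G erev P U"
    and "ordered_rooted_spanning_tree G erev T r ord"
    and "ordered_rooted_spanning_tree G erev T' r' ord'"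
  shows "\<exists>M. (\<forall>i<k. \<forall>j<k. M i j \<in> Aalg sc ip G P U r) \<and>
             mat_eq k (mat_mult k M (mat_adj sc ip M)) (mat_id P r) \<and>
             mat_eq k (mat_mult k (mat_adj sc ip M) M) (mat_id P r) \<and>
             mat_eq k (mat_mult k (mat_mult k M (mat_ham G erev P U T r ord)) (mat_adj sc ip M))
                      (\<lambda>i j. Utree G erev P U T r r' \<circ> mat_ham G erev P U T' r' ord' i j
                              \<circ> Utree G erev P U T r' r) \<and>
             (\<exists>D \<sigma>. \<sigma> permutes {..<k} \<and>
                    (\<forall>i<k. unitary_in sc ip (Aalg sc ip G P U r) (P r) (D i)) \<and>
                    mat_eq k M (mat_mult k (diag_mat D) (perm_mat P r \<sigma>)))"
proof -
  interpret groupoid_representation G erev sc ip P U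
    using assms(2,5) by (intro groupoid_representation.intro groupoid_representation_axioms.intro)
  have T: "is_spanning_tree G erev T" "is_spanning_tree G erev T'"
    and ord: "bij_betw ord {..<k} (verts G)" "bij_betw ord' {..<k} (verts G)"
    using assms(4,6,7) by (simp_all add: ordered_rooted_spanning_tree_def)
  have r: "r \<in> verts G" "r' \<in> verts G"
    using ordered_rooted_spanning_tree_root[OF assms(1,3) assms(6)]
      ordered_rooted_spanning_tree_root[OF assms(1,3) assms(7)] .
  have ord_verts: "ord i \<in> verts G" "ord' i \<in> verts G" if "i < k" for i
    using bij_betw_apply[OF ord(1)] bij_betw_apply[OF ord(2)] that by simp_all
  obtain \<sigma> where \<sigma>: "\<sigma> permutes {..<k}" and ord_inv: "\<And>i. i < k \<Longrightarrow> ord (inv \<sigma> i) = ord' i"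
    using relabelling_permutation[OF ord] by (metis lessThan_iff)
  show ?thesis
  proof (rule monomial_gauge_transformation[OF \<sigma> _ zero_in_Aalg[OF r(1)],
        where D = "\<lambda>i. tree_holonomy T T' r r' (ord' i)"], goal_cases)
    case (1 i)
    then show ?case
      by (rule tree_holonomy_unitary[OF T r ord_verts(2)])
  next
    case (2 l m)
    then show ?case
      by (intro mat_ham_zero[OF T(1) r(1)]) (use ord_verts in auto)
  next
    case (3 i j)
    show ?case
      unfolding mat_ham_def ord_inv[OF 3(1)] ord_inv[OF 3(2)]
      by (rule tree_holonomy_conjugation[OF T r ord_verts(2)[OF 3(1)] ord_verts(2)[OF 3(2)]])
  qed
qed

end
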